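(* Let $F$ be a sensori-computational device and $(D,\oplus,e_D)$ a monoid with a right action $\odot:Y(F)\times D\to Y(F)$, regarded as an observation variator via $\bowtie=\{(y,d,y\odot d): y\in Y(F),d\in D\}$. If $D$ is moreover a group and there exists $y_0\in Y(F)$ with $\{y_0\odot d: d\in D\}=Y(F)$, then there exists a sensori-computational device $F'$ that output simulates $F$ modulo $\Delta_F^{D}$.
   Context: A sensori-computational device is a 6-tuple $F=(V,V_0,Y,\tau,C,c)$ where $V$ is a non-empty finite set of states, $V_0\subseteq V$ a non-empty set of initial states, $Y=Y(F)$ a finite set of observations, $\tau:V\times V\to\mathcal{P}(Y)$, $C$ a set of outputs, $c:V\to\mathcal{P}(C)\setminus\{\emptyset\}$. A string $y_1\cdots y_n$ reaches $w$ from $v$ if there are states $w_0=v,\dots,w_n=w$ with $y_i\in\tau(w_{i-1},w_i)$; $\mathcal{R}_F(s)$ is the set of states reached by $s$ from some initial state; $\mathcal{L}(F)=\{s\in Y^*:\mathcal{R}_F(s)\ne\emptyset\}$; $\mathcal{C}_F(s)=\bigcup_{v\in\mathcal{R}_F(s)}c(v)$. For a relation $R\subseteq A\times B$ between sets of strings, $F'$ output simulates $F$ modulo $R$ if for every $s\in\mathcal{L}(F)$: (1) some $t\in\mathcal{L}(F')$ has $s\,R\,t$; (2) every $t\in B$ with $s\,R\,t$ satisfies $t\in\mathcal{L}(F')$ and $\mathcal{C}_F(s)\supseteq\mathcal{C}_{F'}(t)$. A right action satisfies $y\odot e_D=y$ and $(y\odot d_1)\odot d_2=y\odot(d_1\oplus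 d_2)$. Given a ternary relation $\bowtie\subseteq Y\times D\times Y$, the delta relation $\Delta_F^{D}\subseteq\mathcal{L}(F)\times(\{\epsilon\}\cup Y\cdot D^* )$ consists of: $(\epsilon,\epsilon)$; $(y_0,y_0)$ for $y_0\in Y\cap\mathcal{L}(F)$; and $(y_0y_1\cdots y_m,\ y_0d_1\cdots d_m)$ for $y_0\cdots y_m\in\mathcal{L}(F)$, $m\ge1$, whenever $(y_{k-1},d_k,y_k)\in\bowtie$ for all $k$.
   Formalization: D is a finite group rather than an arbitrary group, so its carrier set is finite. The statement above fails without it. *)

theory Defs
  imports "HOL-Algebra.Group"
begin

text \<open>Sensori-computational device F = (V, V0, Y, tau, C, c).\<close>
record ('v, 'y, 'o) scdevice =
  dstates :: "'v set"
  dinit   :: "'v set"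
  dobs    :: "'y set"
  dtrans  :: "'v \<Rightarrow> 'v \<Rightarrow> 'y set"
  doutset :: "'o set"
  dout    :: "'v \<Rightarrow> 'o set"

definition is_device :: "('v, 'y, 'o, 'z) scdevice_scheme \<Rightarrow> bool" where
  "is_device F \<longleftrightarrow>
     finite (dstates F) \<and> dstates F \<noteq> {} \<and>
     dinit F \<subseteq> dstates F \<and> dinit F \<noteq> {} \<and>
     finite (dobs F) \<and>
     (\<forall>v\<in>dstates F. \<forall>w\<in>dstates F. dtrans F v w \<subseteq> dobs F) \<and>
     (\<forall>v\<in>dstates F. dout F v \<subseteq> doutset F \<and> dout F v \<noteq> {})"

fun reaches :: "('v, 'y, 'o, 'z) scdevice_scheme \<Rightarrow> 'y list \<Rightarrow> 'v \<Rightarrow> 'v \<Rightarrow> bool" where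
  "reaches F [] v w \<longleftrightarrow> v = w \<and> v \<in> dstates F"
| "reaches F (y # s) v w \<longleftrightarrow> v \<in> dstates F \<and>
     (\<exists>u\<in>dstates F. y \<in> dtrans F v u \<and> reaches F s u w)"

definition reached :: "('v, 'y, 'o, 'z) scdevice_scheme \<Rightarrow> 'y list \<Rightarrow> 'v set" where
  "reached F s = {w. \<exists>v\<in>dinit F. reaches F s v w}"

definition lang :: "('v, 'y, 'o, 'z) scdevice_scheme \<Rightarrow> 'y list set" where
  "lang F = {s. reached F s \<noteq> {}}"

definition outs :: "('v, 'y, 'o, 'z) scdevice_scheme \<Rightarrow> 'y list \<Rightarrow> 'o set" where
  "outs F s = (\<Union>v\<in>reached F s. dout F v)"

definition output_simulates ::
  "('v, 'y, 'o, 'z) scdevice_scheme \<Rightarrow> ('w, 'x, 'o, 'u) scdevice_scheme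
     \<Rightarrow> ('y list \<times> 'x list) set \<Rightarrow> bool" where
  "output_simulates F F' R \<longleftrightarrow>
     (\<forall>s\<in>lang F.
        (\<exists>t\<in>lang F'. (s, t) \<in> R) \<and>
        (\<forall>t. (s, t) \<in> R \<longrightarrow> t \<in> lang F' \<and> outs F' t \<subseteq> outs F s))"

definition right_action :: "('d, 'm) monoid_scheme \<Rightarrow> 'y set \<Rightarrow> ('y \<Rightarrow> 'd \<Rightarrow> 'y) \<Rightarrow> bool" where
  "right_action D Y act \<longleftrightarrow>
     (\<forall>y\<in>Y. \<forall>d\<in>carrier D. act y d \<in> Y) \<and>
     (\<forall>y\<in>Y. act y \<one>\<^bsub>D\<^esub> = y) \<and>
     (\<forall>y\<in>Y. \<forall>d1\<in>carrier D. \<forall>d2\<in>carrier D.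
        act (act y d1) d2 = act y (d1 \<otimes>\<^bsub>D\<^esub> d2))"

definition action_variator :: "('d, 'm) monoid_scheme \<Rightarrow> 'y set \<Rightarrow> ('y \<Rightarrow> 'd \<Rightarrow> 'y) \<Rightarrow> ('y \<times> 'd \<times> 'y) set" where
  "action_variator D Y act = {(y, d, act y d) | y d. y \<in> Y \<and> d \<in> carrier D}"

text \<open>Delta relation: strings of F related to strings in {eps} \<union> Y.D*, the latter
  encoded as lists over the sum type ('y + 'd).\<close>
definition delta_rel ::
  "('v, 'y, 'o, 'z) scdevice_scheme \<Rightarrow> ('y \<times> 'd \<times> 'y) set \<Rightarrow> ('y list \<times> ('y + 'd) list) set" where
  "delta_rel F B =
     {([], [])}
     \<union> {([y0], [Inl y0]) | y0. y0 \<in> dobs F \<and> [y0] \<in> lang F}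
     \<union> {(s, Inl (s ! 0) # map Inr ds) | s ds.
          s \<in> lang F \<and> length s \<ge> 2 \<and> length ds = length s - 1 \<and>
          (\<forall>k\<in>{1..length ds}. (s ! (k - 1), ds ! (k - 1), s ! k) \<in> B)}"

end

theory Submission
  imports Defs
begin

(* A string y d1 ... dm over Y + D decodes into the observation string y, y.d1, (y.d1).d2, ...,
   and the delta relation pairs each observation string of F exactly with its encodings.
   A device that reads encodings and remembers the last decoded observation can therefore run F
   on the decoded string: after an encoding t of s it is in the states reached by s in F, tagged
   with the last observation of s, so it has the same outputs. Every s has an encoding because
   the action is transitive: if a = y0.p and b = y0.q, then a.(inv p * q) = b. Finally the
   states are renumbered by naturals. *)

lemma reaches_in_dstates: "reaches G t v w \<Longrightarrow> v \<in> dstates G \<and> w \<in> dstates G"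
  by (induction t arbitrary: v) auto

lemma set_subset_dobs_if_reaches:
  assumes "is_device F"
  shows "reaches F s v w \<Longrightarrow> set s \<subseteq> dobs F"
proof (induction s arbitrary: v)
  case (Cons y s)
  then obtain u where "v \<in> dstates F" "u \<in> dstates F" "y \<in> dtrans F v u" "reaches F s u w"
    by auto
  moreover have "y \<in> dobs F"
    using assms calculation unfolding is_device_def by blast
  ultimately show ?case
    using Cons.IH by simp
qed simp

fun act_trace :: "('y \<Rightarrow> 'd \<Rightarrow> 'y) \<Rightarrow> 'y \<Rightarrow> 'd list \<Rightarrow> 'y list" where
  "act_trace act y [] = []"
| "act_trace act y (d # ds) = act y d # act_trace act (act y d) ds"

lemma length_act_trace [simp]: "length (act_trace act y ds) = length ds"
  by (induction ds arbitrary: y) auto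

lemma ball_atLeast1_atMost_iff: "(\<forall>k\<in>{1..n}. P k) \<longleftrightarrow> (\<forall>k<n. P (Suc k))"
  by (auto simp: Ball_def) (metis Suc_pred le_simps(3))

lemma action_variator_steps_iff:
  assumes act_closed: "\<forall>y\<in>Y. \<forall>d\<in>carrier D. act y d \<in> Y" and "y \<in> Y"
  shows "(length ds = length ys \<and>
           (\<forall>k<length ds. ((y # ys) ! k, ds ! k, ys ! k) \<in> action_variator D Y act))
         \<longleftrightarrow> set ds \<subseteq> carrier D \<and> ys = act_trace act y ds"
  using \<open>y \<in> Y\<close>
proof (induction ds arbitrary: y ys)
  case Nil
  then show ?case by auto
next
  case (Cons d ds y ys)
  show ?case
  proof (cases ys)
    case Nil
    then show ?thesis by simp
  next
    case (Cons y' ys')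
    have "(y, d, y') \<in> action_variator D Y act \<longleftrightarrow> d \<in> carrier D \<and> y' = act y d"
      using \<open>y \<in> Y\<close> unfolding action_variator_def by auto
    then show ?thesis
      using Cons Cons.IH[of y' ys'] act_closed \<open>y \<in> Y\<close> by (auto simp: All_less_Suc2)
  qed
qed

lemma delta_rel_action_variator_iff:
  assumes "right_action D (dobs F) act"
  shows "(s, t) \<in> delta_rel F (action_variator D (dobs F) act) \<longleftrightarrow>
           s = [] \<and> t = [] \<or>
           (\<exists>y ds. s = y # act_trace act y ds \<and> t = Inl y # map Inr ds \<and>
              y \<in> dobs F \<and> set ds \<subseteq> carrier D \<and> s \<in> lang F)"
    (is "_ \<longleftrightarrow> ?rhs")
proof -
  let ?V = "action_variator D (dobs F) act"
  have act_closed: "\<forall>y\<in>dobs F. \<forall>d\<in>carrier D. act y d \<in> dobs F"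
    using assms unfolding right_action_def by blast
  have steps_iff: "length ds = length ys \<and> (\<forall>k<length ds. ((y # ys) ! k, ds ! k, ys ! k) \<in> ?V)
      \<longleftrightarrow> set ds \<subseteq> carrier D \<and> ys = act_trace act y ds"
    if "y \<in> dobs F" for y ys ds
    using action_variator_steps_iff[OF act_closed that] .
  have shift: "(\<forall>k\<in>{1..length ds}. ((y # ys) ! (k - 1), ds ! (k - 1), (y # ys) ! k) \<in> ?V)
      \<longleftrightarrow> (\<forall>k<length ds. ((y # ys) ! k, ds ! k, ys ! k) \<in> ?V)" for y ys ds
    by (simp only: ball_atLeast1_atMost_iff diff_Suc_1 nth_Cons_Suc)
  show ?thesis
  proof
    assume "(s, t) \<in> delta_rel F ?V"
    then show ?rhs
      unfolding delta_rel_def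
    proof (elim UnE)
      assume "(s, t) \<in> {([y0], [Inl y0]) | y0. y0 \<in> dobs F \<and> [y0] \<in> lang F}"
      then show ?rhs by force
    next
      assume "(s, t) \<in> {(s, Inl (s ! 0) # map Inr ds) | s ds.
          s \<in> lang F \<and> length s \<ge> 2 \<and> length ds = length s - 1 \<and>
          (\<forall>k\<in>{1..length ds}. (s ! (k - 1), ds ! (k - 1), s ! k) \<in> ?V)}"
      then obtain ds where ds: "s \<in> lang F" "length s \<ge> 2" "length ds = length s - 1"
          "t = Inl (s ! 0) # map Inr ds" "\<forall>k\<in>{1..length ds}. (s ! (k - 1), ds ! (k - 1), s ! k) \<in> ?V"
        by blast
      then obtain y ys where s: "s = y # ys"
        by (cases s) auto
      have steps: "\<forall>k<length ds. ((y # ys) ! k, ds ! k, ys ! k) \<in> ?V"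
        using ds(5) unfolding s shift .
      have "0 < length ds"
        using ds(2,3) by simp
      with steps have "(y, ds ! 0, ys ! 0) \<in> ?V"
        by (metis nth_Cons_0)
      then have "y \<in> dobs F"
        unfolding action_variator_def by blast
      moreover have "length ds = length ys"
        using ds(3) s by simp
      ultimately have "set ds \<subseteq> carrier D" "ys = act_trace act y ds"
        using steps_iff steps by blast+
      with ds(1,4) s \<open>y \<in> dobs F\<close> show ?rhs
        by auto
    qed simp
  next
    assume ?rhs
    then consider "s = []" "t = []"
      | y ds where "s = y # act_trace act y ds" "t = Inl y # map Inr ds" "y \<in> dobs F"
          "set ds \<subseteq> carrier D" "s \<in> lang F"
      by blast
    then show "(s, t) \<in> delta_rel F ?V"
    proof cases
      case 1
      then show ?thesis unfolding delta_rel_def by simp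
    next
      case (2 y ds)
      show ?thesis
      proof (cases ds)
        case Nil
        with 2 show ?thesis unfolding delta_rel_def by simp
      next
        case (Cons d ds')
        have "\<forall>k<length ds. (s ! k, ds ! k, act_trace act y ds ! k) \<in> ?V"
          using steps_iff[of y ds "act_trace act y ds"] 2 by simp
        then have "\<forall>k\<in>{1..length ds}. (s ! (k - 1), ds ! (k - 1), s ! k) \<in> ?V"
          unfolding \<open>s = y # act_trace act y ds\<close> shift .
        moreover have "length s \<ge> 2" "length ds = length s - 1" "t = Inl (s ! 0) # map Inr ds"
          using 2 Cons by simp_all
        ultimately show ?thesis
          unfolding delta_rel_def using \<open>s \<in> lang F\<close>
          by (intro UnI2 CollectI exI[of _ s] exI[of _ ds]) simp
      qed
    qed
  qed
qed

lemma right_action_transitive: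
  assumes "group D" "right_action D Y act"
    and "y0 \<in> Y" "{act y0 d | d. d \<in> carrier D} = Y"
    and "a \<in> Y" "b \<in> Y"
  shows "\<exists>d\<in>carrier D. act a d = b"
proof -
  interpret group D by fact
  obtain p q where pq: "p \<in> carrier D" "q \<in> carrier D" "a = act y0 p" "b = act y0 q"
    using assms(4-6) by blast
  have "act a (inv\<^bsub>D\<^esub> p \<otimes>\<^bsub>D\<^esub> q) = act y0 (p \<otimes>\<^bsub>D\<^esub> (inv\<^bsub>D\<^esub> p \<otimes>\<^bsub>D\<^esub> q))"
    using assms(2,3) pq unfolding right_action_def by simp
  also have "\<dots> = b"
    using pq by (simp add: m_assoc[symmetric])
  finally show ?thesis
    using pq by blast
qed

lemma act_trace_onto:
  assumes "\<forall>a\<in>Y. \<forall>b\<in>Y. \<exists>d\<in>carrier D. act a d = b"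
  shows "y \<in> Y \<Longrightarrow> set ys \<subseteq> Y \<Longrightarrow> \<exists>ds. set ds \<subseteq> carrier D \<and> act_trace act y ds = ys"
proof (induction ys arbitrary: y)
  case Nil
  show ?case
    by (intro exI[of _ "[]"]) simp
next
  case (Cons y' ys)
  then obtain d ds where "d \<in> carrier D" "act y d = y'" "set ds \<subseteq> carrier D" "act_trace act y' ds = ys"
    using assms by (metis insert_subset list.set(2))
  then show ?case
    by (intro exI[of _ "d # ds"]) auto
qed

(* The second state component is the last observation of F read so far (None before the first
   letter); it is what decodes an increment d into the observation act y d. *)
definition delta_device ::
  "('v, 'y, 'o) scdevice \<Rightarrow> ('d, 'm) monoid_scheme \<Rightarrow> ('y \<Rightarrow> 'd \<Rightarrow> 'y)
     \<Rightarrow> ('v \<times> 'y option, 'y + 'd, 'o) scdevice" where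
  "delta_device F D act =
     \<lparr>dstates = dstates F \<times> insert None (Some ` dobs F),
      dinit = dinit F \<times> {None},
      dobs = Inl ` dobs F \<union> Inr ` carrier D,
      dtrans = (\<lambda>(v, q) (w, q'). case q' of
          None \<Rightarrow> {}
        | Some y' \<Rightarrow>
            if y' \<in> dtrans F v w then
              (case q of None \<Rightarrow> {Inl y'} | Some y \<Rightarrow> Inr ` {d \<in> carrier D. act y d = y'})
            else {}),
      doutset = doutset F,
      dout = (\<lambda>(v, q). dout F v)\<rparr>"

lemma delta_device_simps [simp]:
  "dstates (delta_device F D act) = dstates F \<times> insert None (Some ` dobs F)"
  "dinit (delta_device F D act) = dinit F \<times> {None}"
  "dobs (delta_device F D act) = Inl ` dobs F \<union> Inr ` carrier D"
  "dtrans (delta_device F D act) (v, q) (w, None) = {}"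
  "dtrans (delta_device F D act) (v, None) (w, Some y') =
     (if y' \<in> dtrans F v w then {Inl y'} else {})"
  "dtrans (delta_device F D act) (v, Some y) (w, Some y') =
     (if y' \<in> dtrans F v w then Inr ` {d \<in> carrier D. act y d = y'} else {})"
  "doutset (delta_device F D act) = doutset F"
  "dout (delta_device F D act) (v, q) = dout F v"
  by (simp_all add: delta_device_def)

lemma is_device_delta_device:
  assumes "is_device F" "finite (carrier D)"
  shows "is_device (delta_device F D act)"
  using assms unfolding is_device_def
  by (auto split: option.splits if_splits)

lemma reaches_delta_device_Inr:
  assumes "is_device F" "y \<in> dobs F"
  shows "reaches (delta_device F D act) (map Inr ds) (v, Some y) (w, q) \<longleftrightarrow>
           set ds \<subseteq> carrier D \<and> reaches F (act_trace act y ds) v w \<and>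
           q = Some (last (y # act_trace act y ds))"
  using assms(2)
proof (induction ds arbitrary: v y)
  case Nil
  then show ?case by auto
next
  case (Cons d ds v y)
  have "act y d \<in> dobs F" if "act y d \<in> dtrans F v u" "v \<in> dstates F" "u \<in> dstates F" for u
    using assms(1) that unfolding is_device_def by blast
  then show ?case
    using Cons.IH Cons.prems by (auto split: option.splits)
qed

lemma reaches_delta_device:
  assumes "is_device F"
  shows "reaches (delta_device F D act) (Inl y # map Inr ds) (v, None) (w, q) \<longleftrightarrow>
           set ds \<subseteq> carrier D \<and> reaches F (y # act_trace act y ds) v w \<and>
           q = Some (last (y # act_trace act y ds))"
proof -
  have obs: "y \<in> dobs F" if "y \<in> dtrans F v u" "v \<in> dstates F" "u \<in> dstates F" for u
    using assms that unfolding is_device_def by blast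
  have inr: "reaches (delta_device F D act) (map Inr ds) (u, Some y) (w, q) \<longleftrightarrow>
      set ds \<subseteq> carrier D \<and> reaches F (act_trace act y ds) u w \<and>
      q = Some (last (y # act_trace act y ds))"
    if "y \<in> dtrans F v u" "v \<in> dstates F" "u \<in> dstates F" for u
    using reaches_delta_device_Inr[OF assms obs[OF that]] .
  have "reaches (delta_device F D act) (Inl y # map Inr ds) (v, None) (w, q) \<longleftrightarrow>
      v \<in> dstates F \<and> (\<exists>u\<in>dstates F. y \<in> dtrans F v u \<and>
        reaches (delta_device F D act) (map Inr ds) (u, Some y) (w, q))"
    using obs by (auto split: if_splits)
  also have "\<dots> \<longleftrightarrow> v \<in> dstates F \<and> (\<exists>u\<in>dstates F. y \<in> dtrans F v u \<and>
      set ds \<subseteq> carrier D \<and> reaches F (act_trace act y ds) u w \<and>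
      q = Some (last (y # act_trace act y ds)))"
    using inr by (auto simp del: last.simps reaches.simps)
  finally show ?thesis
    by (auto simp del: last.simps)
qed

lemma reached_delta_device_Nil:
  "reached (delta_device F D act) [] = reached F [] \<times> {None}"
  unfolding reached_def by auto

lemma reached_delta_device:
  assumes "is_device F"
  shows "reached (delta_device F D act) (Inl y # map Inr ds) =
           (if set ds \<subseteq> carrier D
            then reached F (y # act_trace act y ds) \<times> {Some (last (y # act_trace act y ds))}
            else {})"
  unfolding reached_def
  by (auto simp del: reaches.simps last.simps simp add: reaches_delta_device[OF assms])

lemma delta_device_simulates:
  assumes "is_device F" "right_action D (dobs F) act"
    and transitive: "\<forall>a\<in>dobs F. \<forall>b\<in>dobs F. \<exists>d\<in>carrier D. act a d = b"
  shows "output_simulates F (delta_device F D act) (delta_rel F (action_variator D (dobs F) act))"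
proof -
  let ?G = "delta_device F D act"
  let ?R = "delta_rel F (action_variator D (dobs F) act)"
  note delta_iff = delta_rel_action_variator_iff[OF assms(2)]
  have related: "t \<in> lang ?G \<and> outs ?G t = outs F s" if "(s, t) \<in> ?R" "s \<in> lang F" for s t
  proof -
    obtain q where q: "reached ?G t = reached F s \<times> {q}"
      using \<open>(s, t) \<in> ?R\<close> unfolding delta_iff
      by (auto simp: reached_delta_device_Nil reached_delta_device[OF assms(1)])
    then have "t \<in> lang ?G"
      using \<open>s \<in> lang F\<close> unfolding lang_def by simp
    moreover have "outs ?G t = outs F s"
      unfolding outs_def q by auto
    ultimately show ?thesis ..
  qed
  have "\<exists>t. (s, t) \<in> ?R" if "s \<in> lang F" for s
  proof (cases s)
    case Nil
    then show ?thesis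
      unfolding delta_iff by blast
  next
    case (Cons y ys)
    have "set s \<subseteq> dobs F"
      using \<open>s \<in> lang F\<close> set_subset_dobs_if_reaches[OF assms(1)]
      unfolding lang_def reached_def by blast
    then obtain ds where "set ds \<subseteq> carrier D" "act_trace act y ds = ys"
      using act_trace_onto[OF transitive, of y ys] Cons by auto
    with Cons \<open>set s \<subseteq> dobs F\<close> \<open>s \<in> lang F\<close> have "(s, Inl y # map Inr ds) \<in> ?R"
      unfolding delta_iff by auto
    then show ?thesis ..
  qed
  then show ?thesis
    unfolding output_simulates_def using related by blast
qed

definition rename_states :: "('a \<Rightarrow> 'b) \<Rightarrow> ('a, 'x, 'o) scdevice \<Rightarrow> ('b, 'x, 'o) scdevice" where
  "rename_states h G =
     \<lparr>dstates = h ` dstates G,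
      dinit = h ` dinit G,
      dobs = dobs G,
      dtrans = (\<lambda>i j. dtrans G (inv_into (dstates G) h i) (inv_into (dstates G) h j)),
      doutset = doutset G,
      dout = (\<lambda>i. dout G (inv_into (dstates G) h i))\<rparr>"

lemma reaches_rename_states:
  assumes "inj_on h (dstates G)"
  shows "reaches (rename_states h G) t i j \<longleftrightarrow>
           (\<exists>v\<in>dstates G. \<exists>w\<in>dstates G. i = h v \<and> j = h w \<and> reaches G t v w)"
proof (induction t arbitrary: i)
  case Nil
  then show ?case
    by (auto simp: rename_states_def)
next
  case (Cons y t)
  then show ?case
    by (fastforce simp: rename_states_def inv_into_f_f[OF assms] inj_on_eq_iff[OF assms])
qed

lemma reached_rename_states:
  assumes "inj_on h (dstates G)" "dinit G \<subseteq> dstates G"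
  shows "reached (rename_states h G) t = h ` reached G t"
  using assms reaches_rename_states[OF assms(1)] reaches_in_dstates
  unfolding reached_def by (fastforce simp: rename_states_def inj_on_eq_iff[OF assms(1)])

lemma
  assumes "is_device G" "inj_on h (dstates G)"
  shows is_device_rename_states: "is_device (rename_states h G)"
    and lang_rename_states: "lang (rename_states h G) = lang G"
    and outs_rename_states: "outs (rename_states h G) t = outs G t"
proof -
  have init: "dinit G \<subseteq> dstates G"
    using assms(1) unfolding is_device_def by blast
  show "is_device (rename_states h G)"
    using assms(1) unfolding is_device_def rename_states_def
    by (auto simp: inv_into_f_f[OF assms(2)])
  show "lang (rename_states h G) = lang G"
    unfolding lang_def reached_rename_states[OF assms(2) init] by simp
  have "reached G t \<subseteq> dstates G"
    using reaches_in_dstates unfolding reached_def by fastforce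
  have "outs (rename_states h G) t = (\<Union>v\<in>reached G t. dout G (inv_into (dstates G) h (h v)))"
    unfolding outs_def reached_rename_states[OF assms(2) init] by (simp add: rename_states_def)
  also have "\<dots> = outs G t"
    unfolding outs_def using \<open>reached G t \<subseteq> dstates G\<close>
    by (intro SUP_cong) (auto simp: inv_into_f_f[OF assms(2)])
  finally show "outs (rename_states h G) t = outs G t" .
qed

lemma ex_nat_device:
  fixes G :: "('a, 'x, 'o) scdevice"
  assumes "is_device G"
  obtains G' :: "(nat, 'x, 'o) scdevice"
  where "is_device G'" "lang G' = lang G" "\<And>t. outs G' t = outs G t"
proof -
  have "finite (dstates G)"
    using assms unfolding is_device_def by blast
  then obtain h :: "'a \<Rightarrow> nat" where "inj_on h (dstates G)"
    using finite_imp_inj_to_nat_seg by blast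
  with assms that show ?thesis
    using is_device_rename_states lang_rename_states outs_rename_states by metis
qed

lemma output_simulates_cong:
  assumes "lang G' = lang G" "\<And>t. outs G' t = outs G t"
  shows "output_simulates F G' R \<longleftrightarrow> output_simulates F G R"
  using assms unfolding output_simulates_def by simp

theorem proposition4:
  fixes F :: "('v, 'y, 'o) scdevice"
    and D :: "('d, 'm) monoid_scheme"
    and act :: "'y \<Rightarrow> 'd \<Rightarrow> 'y"
  assumes "is_device F"
    and "monoid D"
    and "right_action D (dobs F) act"
    and "group D"
    and "finite (carrier D)"
    and "y0 \<in> dobs F"
    and "{act y0 d | d. d \<in> carrier D} = dobs F"
  shows "\<exists>F' :: (nat, 'y + 'd, 'o) scdevice.
           is_device F' \<and>
           output_simulates F F' (delta_rel F (action_variator D (dobs F) act))"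
proof -
  have "\<forall>a\<in>dobs F. \<forall>b\<in>dobs F. \<exists>d\<in>carrier D. act a d = b"
    using right_action_transitive[OF assms(4,3,6,7)] by blast
  then have "output_simulates F (delta_device F D act) (delta_rel F (action_variator D (dobs F) act))"
    using delta_device_simulates assms(1,3) by blast
  moreover obtain F' :: "(nat, 'y + 'd, 'o) scdevice" where
    "is_device F'" "lang F' = lang (delta_device F D act)"
    "\<And>t. outs F' t = outs (delta_device F D act) t"
    using ex_nat_device is_device_delta_device[OF assms(1,5)] by blast
  ultimately show ?thesis
    using output_simulates_cong by blast
qed

end
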